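(* Let $\mu>\lambda$ and let $c=(c_1,c_2)$ be a positive unit vector ($\langle c\cdot c\rangle=1$). Then there is $\eta\in\mathbb C$ with $PCT\,f_{c\,\nu,\mathbf p}=\eta\,f_{c\,\nu,\mathbf p}$ for all $\mathbf p$ if and only if there exist $\theta_1,\theta_2\in\mathbb R$ such that $$c_1=\frac{e^{\frac12\pi\nu+i\theta_1}}{\sqrt{2\sinh\pi\nu}},\qquad c_2=\frac{e^{-\frac12\pi\nu+i\theta_2}}{\sqrt{2\sinh\pi\nu}},$$ and in that case $\eta=e^{-i(\theta_1+\theta_2+\frac32\pi)}$.
   Context: Fix $\omega>0$; work in the conformal chart $(t,\mathbf x)$, $t<0$, $\mathbf x\in\mathbb R^3$, of de Sitter spacetime. Let $\mu=m/\omega$ ($m$ the mass), $\lambda>0$ the coupling constant, $\mu>\lambda$, $\nu=\sqrt{\mu^2-\lambda^2}>0$. $J_a$ denotes the Bessel function of the first kind. For $\mathbf p\in\mathbb R^3$, $p=|\mathbf p|$, let $u_{\nu,\mathbf p}(t,\mathbf x)=\sqrt{\pi/\omega}\,(2\sinh\pi\nu)^{-1/2}(2\pi)^{-3/2}(-\omega t)^{3/2}J_{i\nu}(-pt)\,e^{i\mathbf x\cdot\mathbf p}$. On $\mathbb C^2$ use $\langle c\cdot c'\rangle=c_1^*c_1'-c_2^*c_2'$. For $c=(c_1,c_2)$ set $f_{c\,\nu,\mathbf p}=c_1u_{\nu,\mathbf p}+c_2u^*_{\nu,-\mathbf p}$. Operators: $(Pf)(t,\mathbf x)=f(t,-\mathbf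 x)$; $Cf=f^*$ (antilinear); $T$ replaces $t$ by $-t$ in the explicit formulas, where the multivalued factors are continued as $(-\omega(-t))^{3/2}=e^{\frac32 i\pi}(-\omega t)^{3/2}$ and $J_a(-s)=e^{i\pi a}J_a(s)$ for $s>0$ and any index $a$ (so $J_{\pm i\nu}(-s)=e^{\mp\pi\nu}J_{\pm i\nu}(s)$), term by term in linear combinations; $PCT=P\circ C\circ T$. *)

theory Defs
  imports "HOL-Analysis.Analysis"
begin

definition besselJ :: "complex \<Rightarrow> real \<Rightarrow> complex" where
  "besselJ a s = (\<Sum>k. (-1) ^ k * rGamma (of_nat k + a + 1) / fact k
                        * (complex_of_real (s / 2)) powr (2 * of_nat k + a))"

text \<open>nu = sqrt(mu^2 - lambda^2) with mu = m / omega.\<close>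
definition dsNu :: "real \<Rightarrow> real \<Rightarrow> real \<Rightarrow> real" where
  "dsNu m omega lam = sqrt ((m / omega)^2 - lam^2)"

definition dsN :: "real \<Rightarrow> real \<Rightarrow> real" where
  "dsN omega nu = sqrt (pi / omega) * (2 * sinh (pi * nu)) powr (-1/2) * (2 * pi) powr (-3/2)"

text \<open>Explicit formula N (-omega t)^(3/2) J_a(-p t) e^(i x.p), with Bessel index a.
  u_{nu,p} is the case a = i nu; u*_{nu,-p} has explicit formula with a = -i nu
  (since conj J_{i nu}(s) = J_{-i nu}(s) for s > 0).\<close>
definition dsForm :: "real \<Rightarrow> real \<Rightarrow> complex \<Rightarrow> real^3 \<Rightarrow> real \<Rightarrow> real^3 \<Rightarrow> complex" where
  "dsForm omega nu a p t x =
     complex_of_real (dsN omega nu) * complex_of_real ((- omega * t) powr (3/2))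
     * besselJ a (- norm p * t) * exp (\<i> * complex_of_real (inner x p))"

definition dsU :: "real \<Rightarrow> real \<Rightarrow> real^3 \<Rightarrow> real \<Rightarrow> real^3 \<Rightarrow> complex" where
  "dsU omega nu p t x = dsForm omega nu (\<i> * complex_of_real nu) p t x"

definition dsF :: "real \<Rightarrow> real \<Rightarrow> complex \<times> complex \<Rightarrow> real^3 \<Rightarrow> real \<Rightarrow> real^3 \<Rightarrow> complex" where
  "dsF omega nu c p t x = fst c * dsU omega nu p t x + snd c * cnj (dsU omega nu (- p) t x)"

text \<open>T applied to the explicit formula with index a: t replaced by -t, with
  (-omega(-t))^(3/2) = e^(3 i pi/2) (-omega t)^(3/2) and J_a(-s) = e^(i pi a) J_a(s).\<close>
definition dsFormT :: "real \<Rightarrow> real \<Rightarrow> complex \<Rightarrow> real^3 \<Rightarrow> real \<Rightarrow> real^3 \<Rightarrow> complex" where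
  "dsFormT omega nu a p t x =
     complex_of_real (dsN omega nu)
     * (exp (3/2 * pi * \<i>) * complex_of_real ((- omega * t) powr (3/2)))
     * (exp (\<i> * pi * a) * besselJ a (- norm p * t)) * exp (\<i> * complex_of_real (inner x p))"

definition dsTF :: "real \<Rightarrow> real \<Rightarrow> complex \<times> complex \<Rightarrow> real^3 \<Rightarrow> real \<Rightarrow> real^3 \<Rightarrow> complex" where
  "dsTF omega nu c p t x =
     fst c * dsFormT omega nu (\<i> * complex_of_real nu) p t x
     + snd c * dsFormT omega nu (- \<i> * complex_of_real nu) p t x"

definition dsPCTF :: "real \<Rightarrow> real \<Rightarrow> complex \<times> complex \<Rightarrow> real^3 \<Rightarrow> real \<Rightarrow> real^3 \<Rightarrow> complex" where
  "dsPCTF omega nu c p t x = cnj (dsTF omega nu c p t (- x))"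

end

theory Submission
  imports Defs
begin

text \<open>
  Write J = J_{i nu}(-p t) and K = N (-omega t)^(3/2) e^(i x.p), which never vanishes. Then
  f = K (c1 J + c2 J*), and since J_{-i nu} = (J_{i nu})* for positive argument,
  PCT f = K i (c1* e^(-pi nu) J* + c2* e^(pi nu) J). The functions J and J* of s > 0 are
  linearly independent: J_{i nu}(s) = (s/2)^(i nu) G((s/2)^2) with G entire and
  G(0) = 1/Gamma(1 + i nu) \<noteq> 0, and letting s tend to 0 along sequences on which the phase
  (s/2)^(i nu) is constant separates the two terms. So PCT f = eta f amounts to
  i c2* e^(pi nu) = eta c1 and i c1* e^(-pi nu) = eta c2. Taking moduli and using
  |c1|^2 - |c2|^2 = 1 forces |eta| = 1 and determines |c1| and |c2|; conversely these moduli,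
  with arbitrary phases theta1, theta2, satisfy both relations with
  eta = e^(-i (theta1 + theta2 + 3 pi/2)).
\<close>

definition besselJ_coeff :: "complex \<Rightarrow> nat \<Rightarrow> complex" where
  "besselJ_coeff a k = (-1) ^ k * rGamma (of_nat k + a + 1) / fact k"

definition besselJ_series :: "complex \<Rightarrow> complex \<Rightarrow> complex" where
  "besselJ_series a y = (\<Sum>k. besselJ_coeff a k * y ^ k)"

lemma norm_rGamma_shift_le:
  assumes "Re a \<ge> 0"
  shows "norm (rGamma (of_nat k + a + 1)) \<le> norm (rGamma (a + 1))"
proof (induction k)
  case 0
  then show ?case by simp
next
  case (Suc k)
  define z where "z = of_nat k + a + 1"
  have "1 \<le> Re z" using assms by (simp add: z_def)
  also have "\<dots> \<le> norm z" by (rule complex_Re_le_cmod)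
  finally have "norm (rGamma (z + 1)) \<le> norm z * norm (rGamma (z + 1))"
    by (simp add: mult_le_cancel_right1)
  also have "\<dots> = norm (rGamma z)" by (metis norm_mult rGamma_plus1)
  also have "\<dots> \<le> norm (rGamma (a + 1))" using Suc.IH by (simp add: z_def)
  finally show ?case by (simp add: z_def add_ac)
qed

lemma summable_besselJ_coeff:
  assumes "Re a \<ge> 0"
  shows "summable (\<lambda>k. besselJ_coeff a k * y ^ k)"
proof (rule summable_comparison_test')
  show "summable (\<lambda>k. norm (rGamma (a + 1)) * (inverse (fact k) * norm y ^ k))"
    by (intro summable_mult summable_exp)
  show "norm (besselJ_coeff a k * y ^ k) \<le> norm (rGamma (a + 1)) * (inverse (fact k) * norm y ^ k)"
    for k
    using norm_rGamma_shift_le[OF assms, of k]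
    by (simp add: besselJ_coeff_def norm_mult norm_divide norm_power divide_simps mult_right_mono)
qed

lemma isCont_besselJ_series: "Re a \<ge> 0 \<Longrightarrow> isCont (besselJ_series a) y"
  unfolding besselJ_series_def
  by (rule isCont_powser_converges_everywhere) (rule summable_besselJ_coeff)

lemma besselJ_series_0 [simp]: "besselJ_series a 0 = rGamma (a + 1)"
  unfolding besselJ_series_def
  by (subst suminf_finite[of "{0}"]) (auto simp: besselJ_coeff_def)

lemma cnj_besselJ_series:
  assumes "Re a \<ge> 0"
  shows "cnj (besselJ_series a y) = besselJ_series (cnj a) (cnj y)"
proof -
  have "(\<lambda>k. cnj (besselJ_coeff a k * y ^ k)) sums cnj (besselJ_series a y)"
    unfolding besselJ_series_def by (simp only: sums_cnj summable_sums[OF summable_besselJ_coeff[OF assms]])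
  then show ?thesis
    unfolding besselJ_series_def by (simp add: besselJ_coeff_def cnj_rGamma sums_iff)
qed

lemma besselJ_eq_powr_series:
  assumes "s > 0" "Re a \<ge> 0"
  shows "besselJ a s = of_real (s / 2) powr a * besselJ_series a (of_real ((s / 2)\<^sup>2))"
proof -
  have "(-1) ^ k * rGamma (of_nat k + a + 1) / fact k * of_real (s / 2) powr (2 * of_nat k + a)
      = of_real (s / 2) powr a * (besselJ_coeff a k * of_real ((s / 2)\<^sup>2) ^ k)" for k
  proof -
    have "of_real (s / 2) powr (2 * of_nat k + a) = of_real (s / 2) powr (of_nat (2 * k)) * of_real (s / 2) powr a"
      by (simp add: powr_add)
    also have "(of_real (s / 2) :: complex) powr (of_nat (2 * k)) = of_real ((s / 2)\<^sup>2) ^ k"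
      using assms by (subst powr_nat') (auto simp: power_mult)
    finally show ?thesis by (simp add: besselJ_coeff_def)
  qed
  then show ?thesis
    unfolding besselJ_def besselJ_series_def
    by (simp add: suminf_mult[OF summable_besselJ_coeff[OF assms(2)]])
qed

lemma cnj_besselJ:
  assumes "s > 0" "Re a = 0"
  shows "cnj (besselJ a s) = besselJ (cnj a) s"
  using assms
  by (simp add: besselJ_eq_powr_series cnj_besselJ_series cnj_powr)

lemma besselJ_imaginary_order:
  assumes "s > 0"
  shows "besselJ (\<i> * of_real nu) s = cis (nu * ln (s / 2)) * besselJ_series (\<i> * of_real nu) (of_real ((s / 2)\<^sup>2))"
proof -
  have "Ln (of_real (s / 2)) = of_real (ln (s / 2))" using assms Ln_of_real[of "s / 2"] by simp
  then have "of_real (s / 2) powr (\<i> * of_real nu) = cis (nu * ln (s / 2))"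
    using assms by (simp add: powr_def cis_conv_exp mult_ac)
  then show ?thesis using assms by (simp add: besselJ_eq_powr_series)
qed

lemma besselJ_imaginary_order_phase_relation:
  fixes nu \<phi> :: real
  assumes nu: "nu > 0"
    and h: "\<And>s. s > 0 \<Longrightarrow> \<alpha> * besselJ (\<i> * nu) s + \<beta> * cnj (besselJ (\<i> * nu) s) = 0"
  shows "\<alpha> * cis \<phi> * rGamma (\<i> * nu + 1) + \<beta> * cis (- \<phi>) * cnj (rGamma (\<i> * nu + 1)) = 0"
proof -
  define G where "G = besselJ_series (\<i> * nu)"
  define q where "q = exp (- 2 * pi / nu)"
  define r where "r n = exp (\<phi> / nu) * q ^ n" for n
  \<comment> \<open>\<open>r n \<rightarrow> 0\<close>, while the phase \<open>(r n)\<^sup>i\<^sup>\<nu>\<close> of \<open>J\<^sub>i\<^sub>\<nu>(2 r n)\<close> stays equal to \<open>cis \<phi>\<close>\<close>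
  have q: "0 < q" "q < 1" using nu by (auto simp: q_def)
  have r_pos: "r n > 0" for n using q by (simp add: r_def)
  have "cis (nu * ln (r n)) = cis \<phi>" for n
  proof -
    have "ln (r n) = \<phi> / nu + real n * (- 2 * pi / nu)"
      using q by (simp add: r_def q_def ln_mult ln_realpow)
    then have "nu * ln (r n) = \<phi> - 2 * pi * real n"
      using nu by (simp add: field_simps)
    then show ?thesis by (simp add: cis_divide[symmetric])
  qed
  then have "besselJ (\<i> * nu) (2 * r n) = cis \<phi> * G (of_real ((r n)\<^sup>2))" for n
    using besselJ_imaginary_order[of "2 * r n" nu] r_pos[of n] by (simp add: G_def)
  then have on_sequence: "\<alpha> * cis \<phi> * G (of_real ((r n)\<^sup>2)) + \<beta> * cis (- \<phi>) * cnj (G (of_real ((r n)\<^sup>2))) = 0" for n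
    using h[of "2 * r n"] r_pos[of n] by (simp add: cis_cnj mult.assoc)
  have "r \<longlonglongrightarrow> 0"
    unfolding r_def using q by (intro tendsto_mult_right_zero LIMSEQ_power_zero) auto
  then have "(\<lambda>n. of_real ((r n)\<^sup>2)) \<longlonglongrightarrow> (of_real (0\<^sup>2) :: complex)"
    by (intro tendsto_of_real tendsto_power)
  then have arg_lim: "(\<lambda>n. of_real ((r n)\<^sup>2)) \<longlonglongrightarrow> (0 :: complex)"
    by (simp only: zero_power2 of_real_0)
  have "(\<lambda>n. G (of_real ((r n)\<^sup>2))) \<longlonglongrightarrow> G 0"
    unfolding G_def by (intro isCont_tendsto_compose[OF isCont_besselJ_series] arg_lim) simp
  then have "(\<lambda>n. \<alpha> * cis \<phi> * G (of_real ((r n)\<^sup>2)) + \<beta> * cis (- \<phi>) * cnj (G (of_real ((r n)\<^sup>2))))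
      \<longlonglongrightarrow> \<alpha> * cis \<phi> * G 0 + \<beta> * cis (- \<phi>) * cnj (G 0)"
    by (intro tendsto_intros)
  then show ?thesis
    unfolding on_sequence by (simp add: G_def LIMSEQ_const_iff)
qed

lemma besselJ_imaginary_order_conj_independent:
  fixes nu :: real
  assumes nu: "nu > 0"
    and h: "\<And>s. s > 0 \<Longrightarrow> \<alpha> * besselJ (\<i> * nu) s + \<beta> * cnj (besselJ (\<i> * nu) s) = 0"
  shows "\<alpha> = 0 \<and> \<beta> = 0"
proof -
  define g where "g = rGamma (\<i> * nu + 1)"
  have "\<i> * nu + 1 \<notin> \<int>\<^sub>\<le>\<^sub>0"
    using nu by (auto elim!: nonpos_Ints_cases simp: complex_eq_iff)
  then have "g \<noteq> 0" by (simp add: g_def rGamma_eq_zero_iff)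
  have sum: "\<alpha> * g + \<beta> * cnj g = 0"
    using besselJ_imaginary_order_phase_relation[OF nu h, of 0] by (simp add: g_def)
  have "\<i> * (\<alpha> * g - \<beta> * cnj g) = 0"
    using besselJ_imaginary_order_phase_relation[OF nu h, of "pi / 2"]
    by (simp add: g_def right_diff_distrib mult_ac)
  then have diff: "\<alpha> * g - \<beta> * cnj g = 0" by simp
  have "2 * (\<alpha> * g) = (\<alpha> * g + \<beta> * cnj g) + (\<alpha> * g - \<beta> * cnj g)" by simp
  then have \<alpha>g: "\<alpha> * g = 0" using sum diff by simp
  have "\<beta> * cnj g = 0" using sum by (simp add: \<alpha>g)
  with \<alpha>g show ?thesis using \<open>g \<noteq> 0\<close> by simp
qed

lemma dsF_eq:
  "dsF omega nu c p t x = of_real (dsN omega nu) * of_real ((- omega * t) powr (3/2))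
     * exp (\<i> * of_real (inner x p))
     * (fst c * besselJ (\<i> * nu) (- norm p * t) + snd c * cnj (besselJ (\<i> * nu) (- norm p * t)))"
  unfolding dsF_def dsU_def dsForm_def by (simp add: exp_cnj algebra_simps)

lemma exp_three_halves_pi_i: "exp (3/2 * pi * \<i>) = - \<i>"
proof -
  have "exp (3/2 * pi * \<i>) = cis (pi + pi / 2)"
    by (simp add: cis_conv_exp mult_ac)
  also have "\<dots> = cis pi * cis (pi / 2)" by (simp only: cis_mult)
  finally show ?thesis by simp
qed

lemma dsPCTF_eq:
  assumes "p \<noteq> 0" "t < 0"
  shows "dsPCTF omega nu c p t x = of_real (dsN omega nu) * of_real ((- omega * t) powr (3/2))
     * exp (\<i> * of_real (inner x p))
     * (\<i> * (cnj (fst c) * exp (- of_real (pi * nu)) * cnj (besselJ (\<i> * nu) (- norm p * t))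
            + cnj (snd c) * exp (of_real (pi * nu)) * besselJ (\<i> * nu) (- norm p * t)))"
proof -
  have "- norm p * t > 0" using assms by (simp add: mult_neg_pos mult_pos_neg)
  then have "besselJ (- \<i> * of_real nu) (- norm p * t) = cnj (besselJ (\<i> * nu) (- norm p * t))"
    by (simp add: cnj_besselJ)
  moreover have "exp (\<i> * of_real pi * (\<i> * of_real nu)) = exp (- of_real (pi * nu))"
    and "exp (\<i> * of_real pi * (- \<i> * of_real nu)) = exp (of_real (pi * nu))"
    by (simp_all add: algebra_simps)
  ultimately show ?thesis
    unfolding dsPCTF_def dsTF_def dsFormT_def exp_three_halves_pi_i
    by (simp add: exp_cnj algebra_simps)
qed

lemma dsPCTF_eq_mult_dsF_iff_at:
  fixes omega nu :: real
  assumes "omega > 0" "nu > 0" "p \<noteq> 0" "t < 0"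
  defines "J \<equiv> besselJ (\<i> * nu) (- norm p * t)"
  shows "dsPCTF omega nu c p t x = \<eta> * dsF omega nu c p t x \<longleftrightarrow>
    (\<i> * cnj (snd c) * exp (of_real (pi * nu)) - \<eta> * fst c) * J
    + (\<i> * cnj (fst c) * exp (- of_real (pi * nu)) - \<eta> * snd c) * cnj J = 0"
proof -
  define K where "K = of_real (dsN omega nu) * of_real ((- omega * t) powr (3/2)) * exp (\<i> * of_real (inner x p))"
  have "K \<noteq> 0"
    using assms by (simp add: K_def dsN_def mult_neg_pos mult_pos_neg)
  then have "dsPCTF omega nu c p t x = \<eta> * dsF omega nu c p t x \<longleftrightarrow>
      \<i> * (cnj (fst c) * exp (- of_real (pi * nu)) * cnj J + cnj (snd c) * exp (of_real (pi * nu)) * J)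
      = \<eta> * (fst c * J + snd c * cnj J)"
    unfolding dsPCTF_eq[OF assms(3,4)] dsF_eq J_def K_def[symmetric] by (simp add: mult_ac)
  also have "\<dots> \<longleftrightarrow> \<i> * (cnj (fst c) * exp (- of_real (pi * nu)) * cnj J + cnj (snd c) * exp (of_real (pi * nu)) * J)
      - \<eta> * (fst c * J + snd c * cnj J) = 0"
    by (rule eq_iff_diff_eq_0)
  also have "\<i> * (cnj (fst c) * exp (- of_real (pi * nu)) * cnj J + cnj (snd c) * exp (of_real (pi * nu)) * J)
      - \<eta> * (fst c * J + snd c * cnj J)
    = (\<i> * cnj (snd c) * exp (of_real (pi * nu)) - \<eta> * fst c) * J
      + (\<i> * cnj (fst c) * exp (- of_real (pi * nu)) - \<eta> * snd c) * cnj J"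
    by (simp add: algebra_simps)
  finally show ?thesis .
qed

lemma dsPCTF_eq_mult_dsF_iff:
  fixes omega nu :: real
  assumes omega: "omega > 0" and nu: "nu > 0"
  shows "(\<forall>p::real^3. p \<noteq> 0 \<longrightarrow> (\<forall>t<0. \<forall>x. dsPCTF omega nu c p t x = \<eta> * dsF omega nu c p t x))
     \<longleftrightarrow> \<i> * cnj (snd c) * exp (of_real (pi * nu)) = \<eta> * fst c
       \<and> \<i> * cnj (fst c) * exp (- of_real (pi * nu)) = \<eta> * snd c"
    (is "?eigen \<longleftrightarrow> ?rel1 \<and> ?rel2")
proof
  assume ?eigen
  have "(\<i> * cnj (snd c) * exp (of_real (pi * nu)) - \<eta> * fst c) * besselJ (\<i> * nu) s
      + (\<i> * cnj (fst c) * exp (- of_real (pi * nu)) - \<eta> * snd c) * cnj (besselJ (\<i> * nu) s) = 0"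
    if "s > 0" for s
  proof -
    have "dsPCTF omega nu c (axis 1 1) (- s) 0 = \<eta> * dsF omega nu c (axis 1 1) (- s) 0"
      using \<open>?eigen\<close> that by simp
    then show ?thesis
      using that by (subst (asm) dsPCTF_eq_mult_dsF_iff_at[OF omega nu]) simp_all
  qed
  then have "\<i> * cnj (snd c) * exp (of_real (pi * nu)) - \<eta> * fst c = 0
      \<and> \<i> * cnj (fst c) * exp (- of_real (pi * nu)) - \<eta> * snd c = 0"
    by (rule besselJ_imaginary_order_conj_independent[OF nu])
  then show "?rel1 \<and> ?rel2" by simp
next
  assume rel: "?rel1 \<and> ?rel2"
  show ?eigen
  proof (intro allI impI)
    fix p :: "real^3" and t :: real and x :: "real^3"
    assume "p \<noteq> 0" "t < 0"
    then show "dsPCTF omega nu c p t x = \<eta> * dsF omega nu c p t x"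
      using rel by (simp add: dsPCTF_eq_mult_dsF_iff_at[OF omega nu])
  qed
qed

lemma eigen_relations_imp_norms:
  fixes L :: real and c1 c2 \<eta> :: complex
  assumes L: "L > 0"
    and E1: "\<i> * cnj c2 * exp (of_real L) = \<eta> * c1"
    and E2: "\<i> * cnj c1 * exp (- of_real L) = \<eta> * c2"
    and N: "cnj c1 * c1 - cnj c2 * c2 = 1"
  shows "cmod c1 = exp (L / 2) / sqrt (2 * sinh L)" and "cmod c2 = exp (- L / 2) / sqrt (2 * sinh L)"
proof -
  define u where "u = exp L"
  have u: "u > 1" using L by (simp add: u_def)
  then have uu: "u * u - 1 > 0" using less_1_mult by fastforce
  have exp_minus: "exp (- L) = 1 / u" by (simp add: u_def exp_minus field_simps)
  have n1: "cmod c2 * u = cmod \<eta> * cmod c1"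
    using arg_cong[OF E1, of cmod] by (simp add: norm_mult u_def)
  have n2: "cmod c1 / u = cmod \<eta> * cmod c2"
    using arg_cong[OF E2, of cmod] by (simp add: norm_mult exp_minus flip: exp_of_real)
  have "of_real ((cmod c1)\<^sup>2 - (cmod c2)\<^sup>2) = (1 :: complex)"
    unfolding of_real_diff complex_norm_square using N by (simp add: mult.commute)
  then have nn: "(cmod c1)\<^sup>2 - (cmod c2)\<^sup>2 = 1" by (metis of_real_eq_1_iff)
  then have "cmod c1 > 0" by (smt (verit) norm_ge_zero zero_le_power2 power_zero_numeral)
  then have "cmod c2 > 0" using n2 u by (smt (verit) divide_pos_pos mult_eq_0_iff norm_ge_zero)
  have "cmod c1 * cmod c2 = (cmod \<eta>)\<^sup>2 * (cmod c1 * cmod c2)"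
    using n1 n2 u by (simp add: power2_eq_square field_simps)
  then have "cmod \<eta> = 1"
    using \<open>cmod c1 > 0\<close> \<open>cmod c2 > 0\<close> norm_ge_zero[of \<eta>] by (auto simp: power2_eq_1_iff)
  then have r1: "cmod c1 = u * cmod c2" using n1 by (simp add: mult.commute)
  have "(sqrt (2 * sinh L))\<^sup>2 = 2 * sinh L"
    using L by (intro real_sqrt_pow2) simp
  also have "\<dots> = u - 1 / u"
    by (simp add: sinh_field_def u_def exp_minus)
  finally have S2: "(sqrt (2 * sinh L))\<^sup>2 = u - 1 / u" .
  have "(cmod c2)\<^sup>2 = 1 / u / (u - 1 / u)"
    using nn u uu unfolding r1 by (simp add: power2_eq_square field_simps)
  also have "\<dots> = (exp (- L / 2) / sqrt (2 * sinh L))\<^sup>2"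
    unfolding power_divide S2 by (simp add: exp_minus flip: exp_double)
  finally show "cmod c2 = exp (- L / 2) / sqrt (2 * sinh L)"
    by (rule power2_eq_imp_eq) (use L in simp_all)
  have "(cmod c1)\<^sup>2 = u / (u - 1 / u)"
    using nn u uu unfolding r1 by (simp add: power2_eq_square field_simps)
  also have "\<dots> = (exp (L / 2) / sqrt (2 * sinh L))\<^sup>2"
    unfolding power_divide S2 by (simp add: u_def flip: exp_double)
  finally show "cmod c1 = exp (L / 2) / sqrt (2 * sinh L)"
    by (rule power2_eq_imp_eq) (use L in simp_all)
qed

lemma complex_eq_exp_Arg_div:
  fixes a S :: real
  assumes "cmod z = exp a / S"
  shows "z = exp (of_real a + \<i> * of_real (Arg z)) / of_real S"
proof -
  have "z = of_real (cmod z) * cis (Arg z)"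
    using rcis_cmod_Arg[of z] by (simp add: rcis_def)
  then show ?thesis
    unfolding assms exp_add cis_conv_exp by (simp flip: exp_of_real)
qed

lemma polar_coefficients_eigen_relations:
  fixes L S \<theta>1 \<theta>2 :: real and c1 c2 :: complex
  assumes c1: "c1 = exp (of_real (L / 2) + \<i> * \<theta>1) / of_real S"
    and c2: "c2 = exp (of_real (- L / 2) + \<i> * \<theta>2) / of_real S"
  defines "\<eta> \<equiv> exp (- \<i> * (\<theta>1 + \<theta>2 + 3/2 * pi))"
  shows "\<i> * cnj c2 * exp (of_real L) = \<eta> * c1"
    and "\<i> * cnj c1 * exp (- of_real L) = \<eta> * c2"
proof -
  have "exp (- \<i> * of_real (3/2 * pi)) = cnj (exp (3/2 * pi * \<i>))"
    by (simp add: exp_cnj mult_ac)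
  also have "\<dots> = \<i>"
    by (simp only: exp_three_halves_pi_i) simp
  finally have i: "\<i> = exp (- \<i> * of_real (3/2 * pi))" ..
  have "\<i> * cnj c2 * exp (of_real L)
      = exp (- \<i> * of_real (3/2 * pi) + (of_real (- L / 2) - \<i> * \<theta>2) + of_real L) / of_real S"
    by (subst i) (simp add: c2 exp_cnj flip: exp_add)
  also have "- \<i> * of_real (3/2 * pi) + (of_real (- L / 2) - \<i> * \<theta>2) + of_real L
      = - \<i> * of_real (\<theta>1 + \<theta>2 + 3/2 * pi) + (of_real (L / 2) + \<i> * \<theta>1)"
    by (simp add: algebra_simps)
  finally show "\<i> * cnj c2 * exp (of_real L) = \<eta> * c1"
    by (simp add: \<eta>_def c1 flip: exp_add)
  have "\<i> * cnj c1 * exp (- of_real L)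
      = exp (- \<i> * of_real (3/2 * pi) + (of_real (L / 2) - \<i> * \<theta>1) - of_real L) / of_real S"
    by (subst i) (simp add: c1 exp_cnj flip: exp_add exp_diff)
  also have "- \<i> * of_real (3/2 * pi) + (of_real (L / 2) - \<i> * \<theta>1) - of_real L
      = - \<i> * of_real (\<theta>1 + \<theta>2 + 3/2 * pi) + (of_real (- L / 2) + \<i> * \<theta>2)"
    by (simp add: algebra_simps)
  finally show "\<i> * cnj c1 * exp (- of_real L) = \<eta> * c2"
    by (simp add: \<eta>_def c2 flip: exp_add)
qed

lemma dsPCTF_eigen_iff_polar:
  fixes omega nu :: real and c :: "complex \<times> complex"
  assumes omega: "omega > 0" and nu: "nu > 0"
    and N: "cnj (fst c) * fst c - cnj (snd c) * snd c = 1"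
  shows "(\<exists>\<eta>. \<forall>p::real^3. p \<noteq> 0 \<longrightarrow> (\<forall>t<0. \<forall>x. dsPCTF omega nu c p t x = \<eta> * dsF omega nu c p t x))
     \<longleftrightarrow> (\<exists>(\<theta>1::real) (\<theta>2::real).
            fst c = exp (of_real (pi * nu / 2) + \<i> * \<theta>1) / of_real (sqrt (2 * sinh (pi * nu))) \<and>
            snd c = exp (of_real (- pi * nu / 2) + \<i> * \<theta>2) / of_real (sqrt (2 * sinh (pi * nu))))"
    (is "?eigen \<longleftrightarrow> ?polar")
proof
  assume ?eigen
  then obtain \<eta> where "\<i> * cnj (snd c) * exp (of_real (pi * nu)) = \<eta> * fst c"
      and "\<i> * cnj (fst c) * exp (- of_real (pi * nu)) = \<eta> * snd c"
    using dsPCTF_eq_mult_dsF_iff[OF omega nu] by blast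
  from eigen_relations_imp_norms[OF _ this N] nu
  have "cmod (fst c) = exp (pi * nu / 2) / sqrt (2 * sinh (pi * nu))"
    and "cmod (snd c) = exp (- pi * nu / 2) / sqrt (2 * sinh (pi * nu))"
    by simp_all
  then show ?polar
    by (blast intro: complex_eq_exp_Arg_div)
next
  assume ?polar
  then obtain \<theta>1 \<theta>2 :: real
    where "fst c = exp (of_real (pi * nu / 2) + \<i> * \<theta>1) / of_real (sqrt (2 * sinh (pi * nu)))"
      and "snd c = exp (of_real (- (pi * nu) / 2) + \<i> * \<theta>2) / of_real (sqrt (2 * sinh (pi * nu)))"
    by auto
  from polar_coefficients_eigen_relations[OF this]
  show ?eigen
    using dsPCTF_eq_mult_dsF_iff[OF omega nu] by blast
qed

lemma dsPCTF_eigenvalue: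
  fixes omega nu \<theta>1 \<theta>2 :: real and c :: "complex \<times> complex"
  assumes omega: "omega > 0" and nu: "nu > 0"
    and c1: "fst c = exp (of_real (pi * nu / 2) + \<i> * \<theta>1) / of_real (sqrt (2 * sinh (pi * nu)))"
    and c2: "snd c = exp (of_real (- pi * nu / 2) + \<i> * \<theta>2) / of_real (sqrt (2 * sinh (pi * nu)))"
    and eigen: "\<forall>p::real^3. p \<noteq> 0 \<longrightarrow> (\<forall>t<0. \<forall>x. dsPCTF omega nu c p t x = \<eta> * dsF omega nu c p t x)"
  shows "\<eta> = exp (- \<i> * (\<theta>1 + \<theta>2 + 3/2 * pi))"
proof -
  have "\<eta> * fst c = \<i> * cnj (snd c) * exp (of_real (pi * nu))"
    using eigen dsPCTF_eq_mult_dsF_iff[OF omega nu] by simp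
  also have "\<dots> = exp (- \<i> * (\<theta>1 + \<theta>2 + 3/2 * pi)) * fst c"
    using polar_coefficients_eigen_relations(1)[OF c1] c2 by simp
  finally show ?thesis
    using c1 nu by simp
qed

theorem corollary4:
  fixes omega m lam :: real and c :: "complex \<times> complex"
  assumes "omega > 0" and "lam > 0" and "m / omega > lam"
    and "cnj (fst c) * fst c - cnj (snd c) * snd c = 1"
  shows "((\<exists>\<eta>::complex. \<forall>p::real^3. p \<noteq> 0 \<longrightarrow> (\<forall>t<0. \<forall>x.
            dsPCTF omega (dsNu m omega lam) c p t x = \<eta> * dsF omega (dsNu m omega lam) c p t x))
         \<longleftrightarrow> (\<exists>(\<theta>1::real) (\<theta>2::real).
            fst c = exp (complex_of_real (pi * dsNu m omega lam / 2) + \<i> * \<theta>1)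
                    / complex_of_real (sqrt (2 * sinh (pi * dsNu m omega lam))) \<and>
            snd c = exp (complex_of_real (- pi * dsNu m omega lam / 2) + \<i> * \<theta>2)
                    / complex_of_real (sqrt (2 * sinh (pi * dsNu m omega lam))))) \<and>
         (\<forall>(\<eta>::complex) (\<theta>1::real) (\<theta>2::real).
           (fst c = exp (complex_of_real (pi * dsNu m omega lam / 2) + \<i> * \<theta>1)
                    / complex_of_real (sqrt (2 * sinh (pi * dsNu m omega lam))) \<and>
            snd c = exp (complex_of_real (- pi * dsNu m omega lam / 2) + \<i> * \<theta>2)
                    / complex_of_real (sqrt (2 * sinh (pi * dsNu m omega lam))) \<and>
            (\<forall>p::real^3. p \<noteq> 0 \<longrightarrow> (\<forall>t<0. \<forall>x.
              dsPCTF omega (dsNu m omega lam) c p t x = \<eta> * dsF omega (dsNu m omega lam) c p t x)))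
           \<longrightarrow> \<eta> = exp (- \<i> * (\<theta>1 + \<theta>2 + 3/2 * pi)))"
proof -
  have "(m / omega)\<^sup>2 > lam\<^sup>2" using assms(2,3) by (simp add: power_strict_mono)
  then have nu: "dsNu m omega lam > 0" by (simp add: dsNu_def)
  show ?thesis
    using dsPCTF_eigen_iff_polar[OF assms(1) nu assms(4)] dsPCTF_eigenvalue[OF assms(1) nu]
    by (simp only: of_real_add) blast
qed

end
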